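(* Let $\mathfrak{H}$ be a complete Heyting algebra and define its point-free coderivative by $\divideontimes \mathsf{h} := \bigwedge_{\mathsf{i}\in\mathfrak{H}}(\mathsf{i}\vee(\mathsf{i}\to\mathsf{h}))$. Then $\divideontimes$ is an $\mathsf{mHC}$-operator, i.e. $\divideontimes\top=\top$, $\divideontimes(a\wedge b)=\divideontimes a\wedge\divideontimes b$, $a\le\divideontimes a$, and $\divideontimes a\le b\vee(b\to a)$ for all $a,b\in\mathfrak{H}$. *)

theory Defs
  imports Main
begin

class complete_heyting_algebra = complete_lattice +
  fixes himp :: "'a \<Rightarrow> 'a \<Rightarrow> 'a" (infixr "\<rightharpoonup>" 25)
  assumes himp_residuation: "inf x y \<le> z \<longleftrightarrow> x \<le> (y \<rightharpoonup> z)"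

definition coderiv :: "'a::complete_heyting_algebra \<Rightarrow> 'a" where
  "coderiv h = (INF i. sup i (i \<rightharpoonup> h))"

end

theory Submission
  imports Defs
begin

text \<open>Each of the four properties reduces to an elementary fact about the
Heyting implication: \<open>i \<rightharpoonup> \<top> = \<top>\<close>; \<open>i \<rightharpoonup> -\<close> preserves binary meets and
\<open>i \<squnion> -\<close> does too (a Heyting algebra is distributive), so the pointwise
meet over \<open>i\<close> commutes with \<open>\<sqinter>\<close>; \<open>a \<le> i \<rightharpoonup> a\<close> for every \<open>i\<close>; and the
term indexed by \<open>i = b\<close> bounds the meet from above.\<close>

lemma himp_top [simp]:
  fixes i :: "'a::complete_heyting_algebra"
  shows "(i \<rightharpoonup> top) = top"
  by (metis himp_residuation top_greatest top_unique)

lemma le_himp: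
  fixes i a :: "'a::complete_heyting_algebra"
  shows "a \<le> (i \<rightharpoonup> a)"
  by (metis himp_residuation inf_le1)

lemma himp_inf_distrib:
  fixes i a b :: "'a::complete_heyting_algebra"
  shows "(i \<rightharpoonup> inf a b) = inf (i \<rightharpoonup> a) (i \<rightharpoonup> b)"
proof (rule antisym)
  show "(i \<rightharpoonup> inf a b) \<le> inf (i \<rightharpoonup> a) (i \<rightharpoonup> b)"
    by (metis himp_residuation le_inf_iff order_refl)
  have "inf (inf (i \<rightharpoonup> a) (i \<rightharpoonup> b)) i \<le> a"
    by (metis himp_residuation inf_le1 inf_mono order_refl order_trans)
  moreover have "inf (inf (i \<rightharpoonup> a) (i \<rightharpoonup> b)) i \<le> b"
    by (metis himp_residuation inf_le2 inf_mono order_refl order_trans)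
  ultimately show "inf (i \<rightharpoonup> a) (i \<rightharpoonup> b) \<le> (i \<rightharpoonup> inf a b)"
    by (simp add: himp_residuation[symmetric])
qed

text \<open>Residuation makes \<open>x \<sqinter> -\<close> a left adjoint, hence it preserves joins.\<close>

lemma inf_sup_distrib_le:
  fixes x y z :: "'a::complete_heyting_algebra"
  shows "inf x (sup y z) \<le> sup (inf x y) (inf x z)"
proof -
  have "y \<le> (x \<rightharpoonup> sup (inf x y) (inf x z))" and "z \<le> (x \<rightharpoonup> sup (inf x y) (inf x z))"
    by (metis himp_residuation inf_commute le_supI1 le_supI2 order_refl)+
  then have "sup y z \<le> (x \<rightharpoonup> sup (inf x y) (inf x z))" by simp
  then show ?thesis by (metis himp_residuation inf_commute)
qed

lemma sup_inf_distrib: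
  fixes x y z :: "'a::complete_heyting_algebra"
  shows "sup x (inf y z) = inf (sup x y) (sup x z)"
proof (rule antisym)
  show "sup x (inf y z) \<le> inf (sup x y) (sup x z)"
    by (simp add: le_infI1 le_infI2 le_supI2)
  have "inf (sup x y) (sup x z) \<le> sup (inf (sup x y) x) (inf (sup x y) z)"
    by (rule inf_sup_distrib_le)
  also have "inf (sup x y) z = inf z (sup x y)" by (simp add: inf_commute)
  also have "\<dots> \<le> sup (inf z x) (inf z y)" by (rule inf_sup_distrib_le)
  also have "sup (inf (sup x y) x) (sup (inf z x) (inf z y)) \<le> sup x (inf y z)"
    by (simp add: inf_commute le_supI1 le_infI2 le_supI2)
  finally show "inf (sup x y) (sup x z) \<le> sup x (inf y z)"
    by (meson le_sup_iff order_trans sup_mono order_refl)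
qed

lemma coderiv_top: "coderiv (top :: 'a::complete_heyting_algebra) = top"
  unfolding coderiv_def by simp

lemma coderiv_inf:
  fixes a b :: "'a::complete_heyting_algebra"
  shows "coderiv (inf a b) = inf (coderiv a) (coderiv b)"
  unfolding coderiv_def by (simp add: himp_inf_distrib sup_inf_distrib INF_inf_distrib)

lemma le_coderiv:
  fixes a :: "'a::complete_heyting_algebra"
  shows "a \<le> coderiv a"
  unfolding coderiv_def by (simp add: INF_greatest le_supI2 le_himp)

lemma coderiv_le_sup_himp:
  fixes a b :: "'a::complete_heyting_algebra"
  shows "coderiv a \<le> sup b (b \<rightharpoonup> a)"
  unfolding coderiv_def by (rule INF_lower) simp

theorem proposition4p3:
  fixes a b :: "'a::complete_heyting_algebra"
  shows "coderiv (top :: 'a) = top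
    \<and> coderiv (inf a b) = inf (coderiv a) (coderiv b)
    \<and> a \<le> coderiv a
    \<and> coderiv a \<le> sup b (b \<rightharpoonup> a)"
  using coderiv_top coderiv_inf le_coderiv coderiv_le_sup_himp by blast

end
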